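(* Define $f:[0,1]\times[0,1]\to[0,1]$ by $$f(x,y)=\begin{cases} x, & \text{if } y\le \tfrac12 \text{ (and } x\in[0,1]\text{ arbitrary), or if } x\ge \tfrac12 \text{ (and } y\in[0,1]\text{ arbitrary)},\\ \tfrac12(2x)^{1+\varepsilon}, & \text{if } y=\tfrac12+\varepsilon \text{ with } \varepsilon>0 \text{ and } x\le\tfrac12.\end{cases}$$ Then $([0,1],f)$ is a topological quandle (with the standard topology on $[0,1]$).
   Context: A topological rack is a topological space $X$ with a map $f:X\times X\to X$ such that $f$ is continuous, for every $y\in X$ the right multiplication $R_y:X\to X$, $x\mapsto f(x,y)$, is a homeomorphism, and $f(f(x,y),z)=f(f(x,z),f(y,z))$ for all $x,y,z\in X$. A topological quandle is a topological rack which in addition satisfies $f(x,x)=x$ for all $x\in X$. *)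

theory Defs
  imports "HOL-Analysis.Analysis"
begin

definition topological_rack :: "'a topology \<Rightarrow> ('a \<Rightarrow> 'a \<Rightarrow> 'a) \<Rightarrow> bool" where
  "topological_rack X f \<longleftrightarrow>
     continuous_map (prod_topology X X) X (\<lambda>(x, y). f x y) \<and>
     (\<forall>y \<in> topspace X. homeomorphic_map X X (\<lambda>x. f x y)) \<and>
     (\<forall>x \<in> topspace X. \<forall>y \<in> topspace X. \<forall>z \<in> topspace X.
        f (f x y) z = f (f x z) (f y z))"

definition topological_quandle :: "'a topology \<Rightarrow> ('a \<Rightarrow> 'a \<Rightarrow> 'a) \<Rightarrow> bool" where
  "topological_quandle X f \<longleftrightarrow>
     topological_rack X f \<and> (\<forall>x \<in> topspace X. f x x = x)"

definition example_op :: "real \<Rightarrow> real \<Rightarrow> real" where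
  "example_op x y =
     (if y \<le> 1/2 \<or> x \<ge> 1/2 then x
      else (1/2) * (2 * x) powr (1 + (y - 1/2)))"

end

theory Submission
  imports Defs
begin

text \<open>
  Write \<open>g\<^sub>a\<close> for the map fixing \<open>[1/2, 1]\<close> and sending \<open>x \<le> 1/2\<close> to \<open>(1/2)(2x)\<^sup>a\<close>.
  Then \<open>f(x, y) = g\<^bsub>c(y)\<^esub>(x)\<close> with \<open>c(y) = 1 + max 0 (y - 1/2)\<close>, and \<open>a \<mapsto> g\<^sub>a\<close> is a
  homomorphism from the multiplicative group of positive reals to the homeomorphisms
  of \<open>[0, 1]\<close>. Hence all right translations commute, and since every \<open>g\<^sub>a\<close> preserves
  \<open>[0, 1/2]\<close> and fixes \<open>[1/2, 1]\<close> pointwise, \<open>c \<circ> g\<^sub>a = c\<close>, so that the right translation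
  by \<open>f(y, z)\<close> is the one by \<open>y\<close>. These two facts give self-distributivity;
  idempotence holds because \<open>c = 1\<close> on \<open>[0, 1/2]\<close> and \<open>g\<^sub>a\<close> fixes \<open>[1/2, 1]\<close>.
\<close>

lemma self_distributive_if_right_translations_commute:
  assumes "\<And>x y. x \<in> S \<Longrightarrow> y \<in> S \<Longrightarrow> f x y \<in> S"
    and "\<And>x y z. x \<in> S \<Longrightarrow> y \<in> S \<Longrightarrow> z \<in> S \<Longrightarrow> f (f x y) z = f (f x z) y"
    and "\<And>x y z. x \<in> S \<Longrightarrow> y \<in> S \<Longrightarrow> z \<in> S \<Longrightarrow> f x (f y z) = f x y"
    and "x \<in> S" "y \<in> S" "z \<in> S"
  shows "f (f x y) z = f (f x z) (f y z)"
  using assms by metis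

definition half_powr :: "real \<Rightarrow> real \<Rightarrow> real" where
  "half_powr a x = (if x \<le> 1/2 then (1/2) * (2 * x) powr a else x)"

definition op_exponent :: "real \<Rightarrow> real" where
  "op_exponent y = 1 + max 0 (y - 1/2)"

lemma op_exponent_pos: "op_exponent y > 0"
  unfolding op_exponent_def by auto

lemma double_powr_le_1:
  assumes "a > 0" "x \<in> {0..1/2::real}"
  shows "(2 * x) powr a \<le> 1"
  using assms by (intro powr_le1) auto

lemma half_powr_mem:
  assumes "a > 0" "x \<in> {0..1}"
  shows "half_powr a x \<in> {0..1}"
  using assms double_powr_le_1[of a x] unfolding half_powr_def by auto

lemma half_powr_le_half_iff:
  assumes "a > 0" "x \<in> {0..1}"
  shows "half_powr a x \<le> 1/2 \<longleftrightarrow> x \<le> 1/2"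
  using assms double_powr_le_1[of a x] unfolding half_powr_def by auto

lemma half_powr_1: "x \<ge> 0 \<Longrightarrow> half_powr 1 x = x"
  unfolding half_powr_def by auto

lemma half_powr_half_powr:
  assumes "a > 0" "b > 0" "x \<in> {0..1}"
  shows "half_powr a (half_powr b x) = half_powr (a * b) x"
proof (cases "x \<le> 1/2")
  case True
  then have "half_powr b x \<le> 1/2"
    using half_powr_le_half_iff[OF assms(2,3)] by simp
  then have "half_powr a (half_powr b x) = (1/2) * (2 * ((1/2) * (2 * x) powr b)) powr a"
    using True unfolding half_powr_def by simp
  also have "\<dots> = (1/2) * (2 * x) powr (a * b)"
    by (simp add: powr_powr mult.commute)
  finally show ?thesis
    using True unfolding half_powr_def by simp
next
  case False
  then show ?thesis
    unfolding half_powr_def by simp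
qed

lemma continuous_on_half_powr: "a > 0 \<Longrightarrow> continuous_on {0..1} (half_powr a)"
  unfolding half_powr_def
  by (rule continuous_on_cases_le)
     (auto intro!: continuous_intros continuous_on_powr' simp: mult.commute)

lemma homeomorphic_map_half_powr:
  assumes "a > 0"
  shows "homeomorphic_map (top_of_set {0..1}) (top_of_set {0..1}) (half_powr a)"
proof -
  have "continuous_map (top_of_set {0..1}) (top_of_set {0..1}) (half_powr b)" if "b > 0" for b
    using continuous_on_half_powr[OF that] half_powr_mem[OF that] by auto
  moreover have "half_powr (1 / a) (half_powr a x) = x" "half_powr a (half_powr (1 / a) x) = x"
    if "x \<in> {0..1}" for x
    using assms that by (simp_all add: half_powr_half_powr half_powr_1)
  ultimately have "homeomorphic_maps (top_of_set {0..1}) (top_of_set {0..1})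
      (half_powr a) (half_powr (1 / a))"
    using assms unfolding homeomorphic_maps_def by simp
  then show ?thesis
    using homeomorphic_maps_imp_map by blast
qed

lemma op_exponent_half_powr:
  assumes "a > 0" "y \<in> {0..1}"
  shows "op_exponent (half_powr a y) = op_exponent y"
proof (cases "y \<le> 1/2")
  case True
  then have "half_powr a y \<le> 1/2"
    using half_powr_le_half_iff[OF assms] by simp
  then show ?thesis
    using True unfolding op_exponent_def by simp
next
  case False
  then show ?thesis
    unfolding half_powr_def by simp
qed

lemma example_op_eq_half_powr:
  "x \<in> {0..1} \<Longrightarrow> y \<in> {0..1} \<Longrightarrow> example_op x y = half_powr (op_exponent y) x"
  unfolding example_op_def half_powr_def op_exponent_def by (auto simp: mult.commute)

lemma example_op_mem: "x \<in> {0..1} \<Longrightarrow> y \<in> {0..1} \<Longrightarrow> example_op x y \<in> {0..1}"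
  using half_powr_mem[OF op_exponent_pos] by (simp add: example_op_eq_half_powr)

lemma continuous_on_example_op:
  "continuous_on ({0..1} \<times> {0..1}) (\<lambda>(x, y). example_op x y)"
proof -
  have "continuous_on ({0..1} \<times> {0..1}) (\<lambda>p. if fst p \<le> (1/2::real)
      then (1/2) * (2 * fst p) powr (1 + max 0 (snd p - 1/2)) else fst p)"
    by (rule continuous_on_cases_le)
       (auto intro!: continuous_intros continuous_on_powr' simp: mult.commute)
  then show ?thesis
    by (rule continuous_on_eq)
       (auto simp: example_op_eq_half_powr half_powr_def op_exponent_def)
qed

lemma example_op_right_commute:
  assumes "x \<in> {0..1}" "y \<in> {0..1}" "z \<in> {0..1}"
  shows "example_op (example_op x y) z = example_op (example_op x z) y"
proof -
  have "example_op (example_op x v) w = half_powr (op_exponent w * op_exponent v) x"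
    if "v \<in> {0..1}" "w \<in> {0..1}" for v w
    using assms(1) that example_op_mem[OF assms(1) that(1)]
    by (simp add: example_op_eq_half_powr half_powr_half_powr op_exponent_pos)
  then show ?thesis
    using assms(2,3) by (simp add: mult.commute)
qed

lemma example_op_right_absorb:
  assumes "x \<in> {0..1}" "y \<in> {0..1}" "z \<in> {0..1}"
  shows "example_op x (example_op y z) = example_op x y"
  using assms example_op_mem[OF assms(2,3)]
  by (simp add: example_op_eq_half_powr op_exponent_half_powr op_exponent_pos)

lemma example_op_idem: "x \<in> {0..1} \<Longrightarrow> example_op x x = x"
  by (cases "x \<le> 1/2") (simp_all add: example_op_def)

theorem mainTheorem1:
  shows "topological_quandle (subtopology euclidean {0..1::real}) example_op"
  unfolding topological_quandle_def topological_rack_def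
proof (intro conjI ballI)
  show "continuous_map (prod_topology (top_of_set {0..1}) (top_of_set {0..1}))
      (top_of_set {0..1}) (\<lambda>(x, y). example_op x y)"
    using continuous_on_example_op example_op_mem by auto
next
  fix y :: real
  assume "y \<in> topspace (top_of_set {0..1})"
  then show "homeomorphic_map (top_of_set {0..1}) (top_of_set {0..1}) (\<lambda>x. example_op x y)"
    by (intro homeomorphic_map_eq[OF homeomorphic_map_half_powr[OF op_exponent_pos]])
       (simp add: example_op_eq_half_powr)
next
  fix x y z :: real
  assume "x \<in> topspace (top_of_set {0..1})" "y \<in> topspace (top_of_set {0..1})"
    "z \<in> topspace (top_of_set {0..1})"
  then show "example_op (example_op x y) z = example_op (example_op x z) (example_op y z)"
    using self_distributive_if_right_translations_commute[where S = "{0..1}",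
        OF example_op_mem example_op_right_commute example_op_right_absorb]
    by simp
next
  fix x :: real
  assume "x \<in> topspace (top_of_set {0..1})"
  then show "example_op x x = x"
    by (simp add: example_op_idem)
qed

end
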